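(* Let $\overline{G}$ be the roommate diversity game described in the context. If an outcome $\pi$ of $\overline{G}$ satisfies $|D_\pi^n|=1$ and $|D_\pi^-|=1$, then $\pi$ is a top-type outcome.
   Context: In a roommate diversity game with agent set $N=R\cup B$ ($R$ red, $B$ blue) and room size $s$, an outcome is a partition of $N$ into rooms of size $s$; $\pi(a)$ is the room containing $a$ and $\theta(C)=|C\cap R|/|C|$. Each agent $a$ has a trichotomous preference given by a partition of the fractions into sets $D_a^+$ (approved), $D_a^n$ (neutral), $D_a^-$ (disapproved), possibly empty, with approved $\succ$ neutral $\succ$ disapproved and indifference within each set. For an outcome $\pi$, $D_\pi^+=\{a:\theta(\pi(a))\in D_a^+\}$, and $D_\pi^n$, $D_\pi^-$ are defined analogously. The game $\overline{G}$: $R=\{r_1,r_2,r_3\}$, $B=\{b_1,\dots,b_6\}$, $s=3$; $r_1$: $D^+=\{1/3\}$, $D^-=\{2/3,1\}$; $r_2,r_3$: $D^+=\{2/3\}$, $D^-=\{1/3,1\}$; $b_1,\dots,b_4$: $D^+=\{1/3\}$, $D^n=\{2/3\}$, $D^-=\{0\}$; $b_5,b_6$: $D^+=\{0\}$, $D^-=\{1/3,2/3\}$ (a red agent is never in a room of fraction $0$, a blue agent never in one of fraction $1$). An outcome is top-type if it equals $\{\{r_1,\hat b_1,\hat b_2\},\{r_2,r_3,\hat b_3\},\{b_5,b_6,\hat b_4\}\}$ for some enumeration $\hat b_1,\hat b_2,\hat b_3,\hat b_4$ of $\{b_1,b_2,b_3,b_4\}$. *)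

theory Defs
  imports Complex_Main "HOL-Library.Disjoint_Sets"
begin

datatype agent = r1 | r2 | r3 | b1 | b2 | b3 | b4 | b5 | b6

definition red :: "agent set" where "red = {r1, r2, r3}"
definition blue :: "agent set" where "blue = {b1, b2, b3, b4, b5, b6}"

definition room_size :: nat where "room_size = 3"

definition is_outcome :: "agent set set \<Rightarrow> bool" where
  "is_outcome P \<longleftrightarrow> partition_on (UNIV :: agent set) P \<and> (\<forall>C\<in>P. card C = room_size)"

definition room :: "agent set set \<Rightarrow> agent \<Rightarrow> agent set" where
  "room P a = (THE C. C \<in> P \<and> a \<in> C)"

definition theta :: "agent set \<Rightarrow> rat" where
  "theta C = of_nat (card (C \<inter> red)) / of_nat (card C)"

fun Dplus :: "agent \<Rightarrow> rat set" where
  "Dplus r1 = {1/3}"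
| "Dplus r2 = {2/3}"
| "Dplus r3 = {2/3}"
| "Dplus b1 = {1/3}"
| "Dplus b2 = {1/3}"
| "Dplus b3 = {1/3}"
| "Dplus b4 = {1/3}"
| "Dplus b5 = {0}"
| "Dplus b6 = {0}"

fun Dneut :: "agent \<Rightarrow> rat set" where
  "Dneut r1 = {}"
| "Dneut r2 = {}"
| "Dneut r3 = {}"
| "Dneut b1 = {2/3}"
| "Dneut b2 = {2/3}"
| "Dneut b3 = {2/3}"
| "Dneut b4 = {2/3}"
| "Dneut b5 = {}"
| "Dneut b6 = {}"

fun Dminus :: "agent \<Rightarrow> rat set" where
  "Dminus r1 = {2/3, 1}"
| "Dminus r2 = {1/3, 1}"
| "Dminus r3 = {1/3, 1}"
| "Dminus b1 = {0}"
| "Dminus b2 = {0}"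
| "Dminus b3 = {0}"
| "Dminus b4 = {0}"
| "Dminus b5 = {1/3, 2/3}"
| "Dminus b6 = {1/3, 2/3}"

definition Dplus_out :: "agent set set \<Rightarrow> agent set" where
  "Dplus_out P = {a. theta (room P a) \<in> Dplus a}"
definition Dneut_out :: "agent set set \<Rightarrow> agent set" where
  "Dneut_out P = {a. theta (room P a) \<in> Dneut a}"
definition Dminus_out :: "agent set set \<Rightarrow> agent set" where
  "Dminus_out P = {a. theta (room P a) \<in> Dminus a}"

definition top_type :: "agent set set \<Rightarrow> bool" where
  "top_type P \<longleftrightarrow> (\<exists>x1 x2 x3 x4. distinct [x1, x2, x3, x4] \<and> {x1, x2, x3, x4} = {b1, b2, b3, b4} \<and>
      P = {{r1, x1, x2}, {r2, r3, x3}, {b5, b6, x4}})"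

end

theory Submission
  imports Defs
begin

(* At most one red agent disapproves only if r1 is the sole red in its room and r2, r3 share
   a room without r1: each of the other four ways to distribute the reds over rooms makes two
   reds disapprove. The third room is then all blue: its members among b1-b4 disapprove, and so do
   b5, b6 when they are not in it. If it contains k of b1-b4, exactly k - 1 of b5, b6 lie
   outside it, so there are 2k - 1 disapproving agents, and a single one forces k = 1. *)

lemma UNIV_agent: "(UNIV :: agent set) = {r1, r2, r3, b1, b2, b3, b4, b5, b6}"
  by (auto intro: agent.exhaust)

instance agent :: finite
  by standard (simp add: UNIV_agent)

lemma card_UNIV_agent: "card (UNIV :: agent set) = 9"
  by (simp add: UNIV_agent)

lemma partition_on_block_unique:
  assumes "partition_on A P" "C \<in> P" "D \<in> P" "a \<in> C" "a \<in> D"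
  shows "C = D"
  using assms by (meson disjointD disjoint_iff partition_onD2)

lemma card_partition_on_uniform:
  assumes "partition_on A P" "finite A" "\<And>C. C \<in> P \<Longrightarrow> card C = k"
  shows "card A = k * card P"
proof -
  have "\<And>C. C \<in> P \<Longrightarrow> finite C"
    using assms(1,2) partition_onD1 by (metis Union_upper finite_subset)
  then have "card A = sum card P"
    using card_Union_disjoint partition_onD1[OF assms(1)] partition_onD2[OF assms(1)] by metis
  also have "\<dots> = k * card P"
    using assms(3) by simp
  finally show ?thesis .
qed

lemma partition_on_three_blocks:
  assumes "partition_on A P" "card P = 3" "C1 \<in> P" "C2 \<in> P" "C1 \<noteq> C2"
  shows "P = {C1, C2, A - (C1 \<union> C2)}"
proof -
  have "card (P - {C1, C2}) = 1"
    using assms(2-5) by (simp add: card_Diff_subset)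
  then obtain C3 where C3: "P - {C1, C2} = {C3}"
    by (auto simp: card_1_singleton_iff)
  then have P: "P = {C1, C2, C3}"
    using assms(3,4) by blast
  have "A = C1 \<union> C2 \<union> C3"
    using partition_onD1[OF assms(1)] P by auto
  moreover have "C3 \<inter> (C1 \<union> C2) = {}"
    using partition_on_block_unique[OF assms(1)] C3 assms(3,4) by blast
  ultimately have "C3 = A - (C1 \<union> C2)"
    by blast
  with P show ?thesis by simp
qed

lemma card_outcome: "is_outcome P \<Longrightarrow> card P = 3"
  using card_partition_on_uniform[of UNIV P room_size] card_UNIV_agent
  by (simp add: is_outcome_def room_size_def)

lemma room_eqI:
  assumes "is_outcome P" "C \<in> P" "a \<in> C"
  shows "room P a = C"
  unfolding room_def
proof (rule the_equality)
  show "\<And>D. D \<in> P \<and> a \<in> D \<Longrightarrow> D = C"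
    using assms partition_on_block_unique by (metis is_outcome_def)
qed (use assms in blast)

lemma room_in_outcome:
  assumes "is_outcome P"
  shows "room P a \<in> P" and "a \<in> room P a"
proof -
  obtain C where "C \<in> P" "a \<in> C"
    using assms partition_onD1 by (metis UNIV_I UnionE is_outcome_def)
  then show "room P a \<in> P" "a \<in> room P a"
    using room_eqI[OF assms] by simp_all
qed

lemma card_room: "is_outcome P \<Longrightarrow> card (room P a) = 3"
  using room_in_outcome(1) by (simp add: is_outcome_def room_size_def)

lemma room_eq_room:
  assumes "is_outcome P" "b \<in> room P a"
  shows "room P b = room P a"
  using assms room_eqI room_in_outcome(1) by blast

lemma mem_room_iff:
  assumes "is_outcome P"
  shows "b \<in> room P a \<longleftrightarrow> room P b = room P a"
  using room_eq_room[OF assms] room_in_outcome(2)[OF assms] by metis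

lemma Dminus_out_iff:
  assumes "is_outcome P"
  shows "a \<in> Dminus_out P \<longleftrightarrow> of_nat (card (room P a \<inter> red)) / 3 \<in> Dminus a"
  using assms room_in_outcome(1)
  by (simp add: Dminus_out_def theta_def is_outcome_def room_size_def)

lemma Dminus_out_unique:
  assumes "card (Dminus_out P) \<le> 1" "a \<in> Dminus_out P" "b \<in> Dminus_out P"
  shows "a = b"
  using assms card_le_Suc0_iff_eq[of "Dminus_out P"] by simp

lemma not_red_iff_blue: "a \<notin> red \<longleftrightarrow> a \<in> blue"
  by (cases a) (auto simp: red_def blue_def)

lemma red_rooms_of_single_disapproval:
  assumes P: "is_outcome P" and le1: "card (Dminus_out P) \<le> 1"
  shows "room P r1 \<inter> red = {r1}" and "room P r2 \<inter> red = {r2, r3}"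
proof -
  have "room P r3 = room P r2 \<and> room P r1 \<noteq> room P r2"
  proof (rule ccontr)
    assume "\<not> ?thesis"
    then consider
        (r1_r2) "room P r1 = room P r2" "room P r3 \<noteq> room P r2"
      | (r1_r3) "room P r1 = room P r3" "room P r3 \<noteq> room P r2"
      | (apart) "room P r1 \<noteq> room P r2" "room P r1 \<noteq> room P r3" "room P r3 \<noteq> room P r2"
      | (together) "room P r1 = room P r2" "room P r3 = room P r2"
      by blast
    then obtain a b where "a \<noteq> b" "a \<in> Dminus_out P" "b \<in> Dminus_out P"
    proof cases
      case r1_r2
      then have "room P r1 \<inter> red = {r1, r2}" "room P r3 \<inter> red = {r3}"
        using mem_room_iff[OF P] by (auto simp: red_def)
      then show ?thesis
        using that[of r1 r3] by (simp add: Dminus_out_iff[OF P])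
    next
      case r1_r3
      then have "room P r1 \<inter> red = {r1, r3}" "room P r2 \<inter> red = {r2}"
        using mem_room_iff[OF P] by (auto simp: red_def)
      then show ?thesis
        using that[of r1 r2] by (simp add: Dminus_out_iff[OF P])
    next
      case apart
      then have "room P r2 \<inter> red = {r2}" "room P r3 \<inter> red = {r3}"
        using mem_room_iff[OF P] by (auto simp: red_def)
      then show ?thesis
        using that[of r2 r3] by (simp add: Dminus_out_iff[OF P])
    next
      case together
      then have "room P r2 \<inter> red = {r1, r2, r3}" "room P r3 \<inter> red = {r1, r2, r3}"
        using mem_room_iff[OF P] by (auto simp: red_def)
      then show ?thesis
        using that[of r2 r3] by (simp add: Dminus_out_iff[OF P])
    qed
    then show False
      using Dminus_out_unique[OF le1] by blast
  qed
  then show "room P r1 \<inter> red = {r1}" and "room P r2 \<inter> red = {r2, r3}"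
    using mem_room_iff[OF P] by (auto simp: red_def)
qed

lemma rooms_disjoint:
  assumes "is_outcome P" "room P a \<noteq> room P b"
  shows "room P a \<inter> room P b = {}"
  using assms(2) room_eq_room[OF assms(1)] by (metis IntE equals0I)

lemma card_outside_two_rooms:
  assumes "is_outcome P" "room P a \<noteq> room P b"
  shows "card (UNIV - (room P a \<union> room P b)) = 3"
proof -
  have "card (room P a \<union> room P b) = 6"
    using rooms_disjoint[OF assms] card_room[OF assms(1)] by (simp add: card_Un_disjoint)
  then show ?thesis
    using card_UNIV_agent by (simp add: card_Diff_subset)
qed

lemma mixed_blue_disapproves:
  assumes "is_outcome P" "b \<in> {b1, b2, b3, b4}" "room P b \<inter> red = {}"
  shows "b \<in> Dminus_out P"
  using assms by (auto simp: Dminus_out_iff)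

lemma homophile_blue_disapproves:
  assumes "is_outcome P" "b \<in> {b5, b6}" "card (room P b \<inter> red) \<in> {1, 2}"
  shows "b \<in> Dminus_out P"
  using assms by (auto simp: Dminus_out_iff)

lemma no_red_outside_red_rooms:
  assumes P: "is_outcome P"
    and red1: "room P r1 \<inter> red = {r1}" and red2: "room P r2 \<inter> red = {r2, r3}"
    and a: "a \<notin> room P r1 \<union> room P r2"
  shows "room P a \<inter> red = {}"
proof (rule ccontr)
  assume "room P a \<inter> red \<noteq> {}"
  moreover have "red \<subseteq> room P r1 \<union> room P r2"
    using red1 red2 by (auto simp: red_def)
  ultimately obtain r where "r \<in> room P a" "r \<in> room P r1 \<union> room P r2"
    by blast
  then have "a \<in> room P r1 \<union> room P r2"
    using room_eq_room[OF P] room_in_outcome(2)[OF P] by (metis UnE UnI1 UnI2)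
  with a show False
    by blast
qed

lemma blue_room_of_single_disapproval:
  assumes P: "is_outcome P" and le1: "card (Dminus_out P) \<le> 1"
    and red1: "room P r1 \<inter> red = {r1}" and red2: "room P r2 \<inter> red = {r2, r3}"
  obtains w where "w \<in> {b1, b2, b3, b4}" "UNIV - (room P r1 \<union> room P r2) = {b5, b6, w}"
proof -
  define Rest where "Rest = UNIV - (room P r1 \<union> room P r2)"
  have "room P r1 \<noteq> room P r2"
    using red1 red2 by auto
  then have card_Rest: "card Rest = 3"
    unfolding Rest_def using card_outside_two_rooms[OF P] by blast
  have Rest_no_red: "room P a \<inter> red = {}" if "a \<in> Rest" for a
    using that no_red_outside_red_rooms[OF P red1 red2] unfolding Rest_def by blast
  have Rest_blue: "Rest \<subseteq> blue"
    using Rest_no_red room_in_outcome(2)[OF P] not_red_iff_blue by blast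
  have homophile_outside_Rest: "b \<in> Dminus_out P" if "b \<in> {b5, b6}" "b \<notin> Rest" for b
  proof -
    have "room P b = room P r1 \<or> room P b = room P r2"
      using that(2) room_eq_room[OF P] unfolding Rest_def by blast
    then have "card (room P b \<inter> red) \<in> {1, 2}"
      by (elim disjE) (simp_all add: red1 red2)
    with that(1) show ?thesis
      by (rule homophile_blue_disapproves[OF P])
  qed
  have "b \<in> Rest" if "b \<in> {b5, b6}" for b
  proof (rule ccontr)
    assume "b \<notin> Rest"
    then have "b \<in> Dminus_out P"
      using that homophile_outside_Rest by blast
    then have "c = b" if "c \<in> Rest \<inter> {b1, b2, b3, b4}" for c
      using that mixed_blue_disapproves[OF P] Rest_no_red Dminus_out_unique[OF le1] by blast
    then have "Rest \<inter> {b1, b2, b3, b4} = {}"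
      using that by auto
    then have "Rest \<subseteq> {b5, b6} - {b}"
      using Rest_blue \<open>b \<notin> Rest\<close> by (auto simp: blue_def)
    then have "card Rest \<le> card ({b5, b6} - {b})"
      by (intro card_mono) auto
    also have "\<dots> = 1"
      using that by auto
    finally show False
      using card_Rest by simp
  qed
  then have "card (Rest - {b5, b6}) = 1"
    using card_Rest by (simp add: card_Diff_subset)
  then obtain w where w: "Rest - {b5, b6} = {w}"
    by (auto simp: card_1_singleton_iff)
  show thesis
  proof
    show "w \<in> {b1, b2, b3, b4}"
      using w Rest_blue by (auto simp: blue_def)
    show "UNIV - (room P r1 \<union> room P r2) = {b5, b6, w}"
      using w \<open>\<And>b. b \<in> {b5, b6} \<Longrightarrow> b \<in> Rest\<close> unfolding Rest_def by blast
  qed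
qed

lemma room_of_sole_red:
  assumes P: "is_outcome P" and red: "room P r \<inter> red = {r}"
  obtains x y where "room P r = {r, x, y}" "x \<noteq> y" "x \<notin> red" "y \<notin> red"
proof -
  have "card (room P r - {r}) = 2"
    using card_room[OF P] room_in_outcome(2)[OF P] by simp
  then obtain x y where xy: "room P r - {r} = {x, y}" "x \<noteq> y"
    by (auto simp: card_2_iff)
  show thesis
  proof (rule that)
    show "room P r = {r, x, y}"
      using xy(1) room_in_outcome(2)[OF P] by blast
    show "x \<notin> red" "y \<notin> red"
      using xy(1) red by blast+
  qed (rule xy(2))
qed

lemma room_of_red_pair:
  assumes P: "is_outcome P" and red: "room P r \<inter> red = {r, r'}" and "r \<noteq> r'"
  obtains x where "room P r = {r, r', x}" "x \<notin> red"
proof -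
  have reds: "{r, r'} \<subseteq> room P r"
    using red by blast
  then have "card (room P r - {r, r'}) = 1"
    using card_room[OF P] \<open>r \<noteq> r'\<close> by (simp add: card_Diff_subset)
  then obtain x where x: "room P r - {r, r'} = {x}"
    by (auto simp: card_1_singleton_iff)
  show thesis
  proof (rule that)
    show "room P r = {r, r', x}"
      using reds x by blast
    show "x \<notin> red"
      using x red by blast
  qed
qed

lemma top_type_if_rooms:
  assumes P: "is_outcome P"
    and red1: "room P r1 \<inter> red = {r1}" and red2: "room P r2 \<inter> red = {r2, r3}"
    and w: "w \<in> {b1, b2, b3, b4}" and rest: "UNIV - (room P r1 \<union> room P r2) = {b5, b6, w}"
  shows "top_type P"
proof -
  have "room P r1 \<noteq> room P r2"
    using red1 red2 by auto
  then have rooms: "P = {room P r1, room P r2, {b5, b6, w}}"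
    using partition_on_three_blocks[of UNIV P "room P r1" "room P r2"] P card_outcome
      room_in_outcome(1) rest
    by (metis is_outcome_def)
  obtain x1 x2 where C1: "room P r1 = {r1, x1, x2}" "x1 \<noteq> x2" "x1 \<notin> red" "x2 \<notin> red"
    using room_of_sole_red[OF P red1] .
  obtain x3 where C2: "room P r2 = {r2, r3, x3}" "x3 \<notin> red"
    using room_of_red_pair[OF P red2] by blast
  have "x3 \<notin> room P r1"
    using C2 rooms_disjoint[OF P \<open>room P r1 \<noteq> room P r2\<close>] by blast
  then have x3_new: "x3 \<noteq> x1" "x3 \<noteq> x2"
    using C1 by auto
  have outside: "{b5, b6, w} \<inter> (room P r1 \<union> room P r2) = {}"
    using rest by blast
  then have w_new: "w \<noteq> x1" "w \<noteq> x2" "w \<noteq> x3"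
    using C1 C2 by blast+
  have "x1 \<notin> {b5, b6}" "x2 \<notin> {b5, b6}" "x3 \<notin> {b5, b6}"
    using outside C1 C2 by blast+
  moreover have "blue - {b5, b6} = {b1, b2, b3, b4}"
    by (auto simp: blue_def)
  ultimately have "{x1, x2, x3, w} \<subseteq> {b1, b2, b3, b4}"
    using w C1 C2 not_red_iff_blue by blast
  moreover have "distinct [x1, x2, x3, w]"
    using C1(2) x3_new w_new by auto
  ultimately have "{x1, x2, x3, w} = {b1, b2, b3, b4}"
    by (intro card_subset_eq) (auto simp: distinct_card[of "[x1, x2, x3, w]", simplified])
  with \<open>distinct [x1, x2, x3, w]\<close> show ?thesis
    unfolding top_type_def using rooms C1 C2 by auto
qed

theorem mainTheorem7:
  assumes "is_outcome P"
    and "card (Dneut_out P) = 1"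
    and "card (Dminus_out P) = 1"
  shows "top_type P"
proof -
  have le1: "card (Dminus_out P) \<le> 1"
    using assms(3) by simp
  note reds = red_rooms_of_single_disapproval[OF assms(1) le1]
  obtain w where "w \<in> {b1, b2, b3, b4}" "UNIV - (room P r1 \<union> room P r2) = {b5, b6, w}"
    using blue_room_of_single_disapproval[OF assms(1) le1 reds] .
  then show ?thesis
    using top_type_if_rooms[OF assms(1) reds] by blast
qed

end
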